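(* Let $J\in\mathcal{D}(X)$, let $x\in X$, and let $\tilde u\in\tilde U(J,x)$. Then $(TJ)(f(x,\tilde u))\le(TJ)(x)$.
   Context: Setting: $X$ (state space) and $U$ (control space) are sets; for each $x\in X$, $U(x)\subset U$ is nonempty; $f:X\times U\to X$; the stage cost $g$ satisfies $0\le g(x,u)\le\infty$ for all $x\in X$, $u\in U(x)$. $\mathcal{E}^+(X)$ denotes the set of all functions $J:X\to[0,\infty]$. The Bellman operator is $(TJ)(x)=\inf_{u\in U(x)}\{g(x,u)+J(f(x,u))\}$. The region of decreasing is $\mathcal{D}(X)=\{J\in\mathcal{E}^+(X): (TJ)(x)\le J(x)\ \forall x\in X\}$. For $J\in\mathcal{E}^+(X)$ and $x\in X$, $\tilde U(J,x)=\arg\min_{u\in U(x)}\{g(x,u)+J(f(x,u))\}$. Standing assumption: for every $J\in\mathcal{E}^+(X)$ and every $x\in X$, the infimum defining $(TJ)(x)$ is attained. *)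

theory Defs
  imports Main "HOL-Library.Extended_Nonnegative_Real"
begin

definition bellman :: "('x \<Rightarrow> 'u set) \<Rightarrow> ('x \<Rightarrow> 'u \<Rightarrow> 'x) \<Rightarrow> ('x \<Rightarrow> 'u \<Rightarrow> ennreal)
    \<Rightarrow> ('x \<Rightarrow> ennreal) \<Rightarrow> 'x \<Rightarrow> ennreal" where
  "bellman Uc f g J x = (INF u\<in>Uc x. g x u + J (f x u))"

definition decreasing_region :: "('x \<Rightarrow> 'u set) \<Rightarrow> ('x \<Rightarrow> 'u \<Rightarrow> 'x) \<Rightarrow> ('x \<Rightarrow> 'u \<Rightarrow> ennreal)
    \<Rightarrow> ('x \<Rightarrow> ennreal) set" where
  "decreasing_region Uc f g = {J. \<forall>x. bellman Uc f g J x \<le> J x}"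

definition argmin_controls :: "('x \<Rightarrow> 'u set) \<Rightarrow> ('x \<Rightarrow> 'u \<Rightarrow> 'x) \<Rightarrow> ('x \<Rightarrow> 'u \<Rightarrow> ennreal)
    \<Rightarrow> ('x \<Rightarrow> ennreal) \<Rightarrow> 'x \<Rightarrow> 'u set" where
  "argmin_controls Uc f g J x =
     {u \<in> Uc x. \<forall>v \<in> Uc x. g x u + J (f x u) \<le> g x v + J (f x v)}"

end

theory Submission
  imports Defs
begin

lemma bellman_eq_if_argmin:
  assumes "u \<in> argmin_controls Uc f g J x"
  shows "bellman Uc f g J x = g x u + J (f x u)"
proof (rule antisym)
  from assms have "u \<in> Uc x" by (simp add: argmin_controls_def)
  then show "bellman Uc f g J x \<le> g x u + J (f x u)"
    unfolding bellman_def by (rule INF_lower)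
next
  from assms show "g x u + J (f x u) \<le> bellman Uc f g J x"
    unfolding bellman_def argmin_controls_def by (auto intro: INF_greatest)
qed

lemma bellman_le_if_decreasing:
  assumes "J \<in> decreasing_region Uc f g"
  shows "bellman Uc f g J y \<le> J y"
  using assms by (simp add: decreasing_region_def)

theorem proposition6:
  fixes Uc :: "'x \<Rightarrow> 'u set" and f :: "'x \<Rightarrow> 'u \<Rightarrow> 'x" and g :: "'x \<Rightarrow> 'u \<Rightarrow> ennreal"
  assumes nonempty: "\<And>x. Uc x \<noteq> {}"
    and attained: "\<And>(J :: 'x \<Rightarrow> ennreal) x. \<exists>u \<in> Uc x. g x u + J (f x u) = bellman Uc f g J x"
    and J: "J \<in> decreasing_region Uc f g"
    and ut: "ut \<in> argmin_controls Uc f g J x"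
  shows "bellman Uc f g J (f x ut) \<le> bellman Uc f g J x"
proof -
  have "bellman Uc f g J (f x ut) \<le> J (f x ut)"
    using J by (rule bellman_le_if_decreasing)
  also have "\<dots> \<le> g x ut + J (f x ut)"
    by simp
  also have "\<dots> = bellman Uc f g J x"
    using ut by (rule bellman_eq_if_argmin[symmetric])
  finally show ?thesis .
qed

end
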